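(* Let $D$ be a 2-connected rooted digraph with root $r$. Then there exists an $r-r$ numbering of $D$, that is, a linear ordering $\sigma$ of $V(D)\setminus\{r\}$ such that for every vertex $x\neq r$, either $x$ is an outneighbour of $r$, or there exist two in-neighbours $u$ and $v$ of $x$ with $\sigma(u)<\sigma(x)<\sigma(v)$.
   Context: A rooted digraph is a loopless digraph $D$ with a distinguished vertex $r$ (the root) such that: there is no arc $(u,r)$ for any $u\in V(D)$; there is no arc $(x,y)$ with $x\neq r$ and $y$ an outneighbour of $r$; and $r$ has outdegree at least 2. A cut of a rooted digraph $D$ is a set $S\subseteq V(D)\setminus\{r\}$ such that some vertex $z\notin S$ is not the endpoint of any directed path starting at $r$ in $D-S$. $D$ is 2-connected if it has no cut of size at most 1 (in particular, the empty set is not a cut, so every vertex is reachable from $r$). *)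

theory Defs
  imports Main
begin

definition out_nbrs :: "('a \<times> 'a) set \<Rightarrow> 'a \<Rightarrow> 'a set" where
  "out_nbrs A x = {y. (x, y) \<in> A}"

definition in_nbrs :: "('a \<times> 'a) set \<Rightarrow> 'a \<Rightarrow> 'a set" where
  "in_nbrs A x = {u. (u, x) \<in> A}"

definition rooted_digraph :: "'a set \<Rightarrow> ('a \<times> 'a) set \<Rightarrow> 'a \<Rightarrow> bool" where
  "rooted_digraph V A r \<longleftrightarrow>
     finite V \<and> A \<subseteq> V \<times> V \<and> r \<in> V \<and>
     (\<forall>x. (x, x) \<notin> A) \<and>
     (\<forall>u. (u, r) \<notin> A) \<and>
     (\<forall>x y. x \<noteq> r \<and> y \<in> out_nbrs A r \<longrightarrow> (x, y) \<notin> A) \<and>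
     card (out_nbrs A r) \<ge> 2"

definition is_cut :: "'a set \<Rightarrow> ('a \<times> 'a) set \<Rightarrow> 'a \<Rightarrow> 'a set \<Rightarrow> bool" where
  "is_cut V A r S \<longleftrightarrow> S \<subseteq> V - {r} \<and>
     (\<exists>z \<in> V - S. (r, z) \<notin> (A \<inter> ((V - S) \<times> (V - S)))\<^sup>*)"

definition two_connected :: "'a set \<Rightarrow> ('a \<times> 'a) set \<Rightarrow> 'a \<Rightarrow> bool" where
  "two_connected V A r \<longleftrightarrow> (\<forall>S. card S \<le> 1 \<and> finite S \<longrightarrow> \<not> is_cut V A r S)"

text \<open>An r-r numbering: a linear ordering of V - {r}, given as an injective map into nat.\<close>
definition rr_numbering :: "'a set \<Rightarrow> ('a \<times> 'a) set \<Rightarrow> 'a \<Rightarrow> ('a \<Rightarrow> nat) \<Rightarrow> bool" where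
  "rr_numbering V A r \<sigma> \<longleftrightarrow> inj_on \<sigma> (V - {r}) \<and>
     (\<forall>x \<in> V - {r}. x \<in> out_nbrs A r \<or>
        (\<exists>u \<in> V - {r}. \<exists>v \<in> V - {r}. u \<in> in_nbrs A x \<and> v \<in> in_nbrs A x \<and>
            \<sigma> u < \<sigma> x \<and> \<sigma> x < \<sigma> v))"

end

theory Submission
  imports Defs
begin

text \<open>Induction on the number of vertices. If every vertex other than r is an out-neighbour of r,
any ordering is an r-r numbering. Otherwise some out-neighbour a of r has an out-arc, and among
the out-arcs ay we choose one for which the set of vertices cut off from r by deleting {a, y} is
smallest. Minimality forces {a, y} to cut off nothing but a and y themselves, so contracting the
arc ay into a yields a smaller rooted digraph that is still 2-connected. Since y is not an
out-neighbour of r and {a} is not a cut, y has an in-neighbour u other than a, r and y; a numbering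
of the contraction extends to D by placing y immediately next to a, on the side of u.\<close>

abbreviation induced_arcs :: "('a \<times> 'a) set \<Rightarrow> 'a set \<Rightarrow> ('a \<times> 'a) set" where
  "induced_arcs A W \<equiv> A \<inter> (W \<times> W)"

subsection \<open>Paths in induced subdigraphs\<close>

lemma rtrancl_induced_arcsD: "(x, z) \<in> (induced_arcs A W)\<^sup>* \<Longrightarrow> x = z \<or> z \<in> W"
  by (induct rule: rtrancl_induct) auto

lemma rtrancl_induced_arcs_mono:
  "W \<subseteq> W' \<Longrightarrow> (x, z) \<in> (induced_arcs A W)\<^sup>* \<Longrightarrow> (x, z) \<in> (induced_arcs A W')\<^sup>*"
  by (erule rtrancl_mono[THEN subsetD, rotated]) auto

lemma rtrancl_induced_arcs_avoid_or_hit: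
  assumes "(x, z) \<in> (induced_arcs A W)\<^sup>*"
  shows "(x, z) \<in> (induced_arcs A (W - {b}))\<^sup>* \<or> (x, b) \<in> (induced_arcs A W)\<^sup>*"
  using assms
proof (induct rule: rtrancl_induct)
  case (step w z)
  show ?case
  proof (cases "w = b \<or> z = b")
    case True
    then show ?thesis using step(1,2) by (meson rtrancl.rtrancl_into_rtrancl)
  next
    case False
    then have "(w, z) \<in> induced_arcs A (W - {b})" using step(2) by auto
    then show ?thesis using step(3) by (meson rtrancl.rtrancl_into_rtrancl)
  qed
qed simp

lemma rtrancl_induced_arcs_avoid_or_enter:
  assumes "(x, z) \<in> (induced_arcs A W)\<^sup>*" and "x \<noteq> b"
  shows "(x, z) \<in> (induced_arcs A (W - {b}))\<^sup>* \<or>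
    (\<exists>p. (x, p) \<in> (induced_arcs A (W - {b}))\<^sup>* \<and> (p, b) \<in> A)"
  using assms
proof (induct rule: rtrancl_induct)
  case (step w z)
  then consider "(x, w) \<in> (induced_arcs A (W - {b}))\<^sup>*"
    | "\<exists>p. (x, p) \<in> (induced_arcs A (W - {b}))\<^sup>* \<and> (p, b) \<in> A"
    by blast
  then show ?case
  proof cases
    case 1
    then have "w \<noteq> b" using rtrancl_induced_arcsD[OF 1] step(4) by auto
    show ?thesis
    proof (cases "z = b")
      case True
      then show ?thesis using 1 step(2) by blast
    next
      case False
      then have "(w, z) \<in> induced_arcs A (W - {b})" using step(2) \<open>w \<noteq> b\<close> by auto
      then show ?thesis using 1 by (meson rtrancl.rtrancl_into_rtrancl)
    qed
  qed blast
qed simp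

lemma rtrancl_induced_arcs_avoid_or_leave:
  assumes "(x, z) \<in> (induced_arcs A W)\<^sup>*"
  shows "(x, z) \<in> (induced_arcs A (W - {b}))\<^sup>* \<or> z = b \<or>
    (\<exists>y \<in> W - {b}. (b, y) \<in> A \<and> (y, z) \<in> (induced_arcs A (W - {b}))\<^sup>*)"
  using assms
proof (induct rule: rtrancl_induct)
  case (step w z)
  show ?case
  proof (cases "z = b")
    case False
    show ?thesis
    proof (cases "w = b")
      case True
      then show ?thesis using step(2) False by auto
    next
      case w: False
      then have "(w, z) \<in> induced_arcs A (W - {b})" using step(2) False by auto
      then show ?thesis using step(3) w by (meson rtrancl.rtrancl_into_rtrancl)
    qed
  qed simp
qed simp

subsection \<open>2-connectivity and cut-off vertices\<close>

lemma two_connected_iff_reachable: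
  "two_connected V A r \<longleftrightarrow>
     (\<forall>z \<in> V. (r, z) \<in> (induced_arcs A V)\<^sup>*) \<and>
     (\<forall>s \<in> V - {r}. \<forall>z \<in> V - {s}. (r, z) \<in> (induced_arcs A (V - {s}))\<^sup>*)"
proof
  assume "two_connected V A r"
  then have "\<not> is_cut V A r {}" "\<And>s. \<not> is_cut V A r {s}"
    unfolding two_connected_def by auto
  then show "(\<forall>z \<in> V. (r, z) \<in> (induced_arcs A V)\<^sup>*) \<and>
     (\<forall>s \<in> V - {r}. \<forall>z \<in> V - {s}. (r, z) \<in> (induced_arcs A (V - {s}))\<^sup>*)"
    unfolding is_cut_def by auto
next
  assume reach: "(\<forall>z \<in> V. (r, z) \<in> (induced_arcs A V)\<^sup>*) \<and>
     (\<forall>s \<in> V - {r}. \<forall>z \<in> V - {s}. (r, z) \<in> (induced_arcs A (V - {s}))\<^sup>*)"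
  show "two_connected V A r"
    unfolding two_connected_def
  proof (intro allI impI)
    fix S :: "'a set" assume "card S \<le> 1 \<and> finite S"
    then have "S = {} \<or> (\<exists>s. S = {s})"
      by (metis card_0_eq card_1_singletonE le_Suc_eq One_nat_def le_zero_eq)
    then show "\<not> is_cut V A r S"
      using reach unfolding is_cut_def by auto
  qed
qed

lemma two_connected_reachable:
  "two_connected V A r \<Longrightarrow> z \<in> V \<Longrightarrow> (r, z) \<in> (induced_arcs A V)\<^sup>*"
  by (simp add: two_connected_iff_reachable)

lemma two_connected_reachable_avoiding:
  "two_connected V A r \<Longrightarrow> s \<in> V - {r} \<Longrightarrow> z \<in> V - {s} \<Longrightarrow>
    (r, z) \<in> (induced_arcs A (V - {s}))\<^sup>*"
  by (simp add: two_connected_iff_reachable)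

lemma rooted_digraph_arc_from_out_nbr:
  assumes "rooted_digraph V A r" and "a \<in> out_nbrs A r" and "(a, y) \<in> A"
  shows "a \<in> V - {r}" and "y \<in> V - {a, r}" and "y \<notin> out_nbrs A r"
proof -
  from assms(1) have AV: "A \<subseteq> V \<times> V" and noloop: "\<And>x. (x, x) \<notin> A"
    and no_in_r: "\<And>u. (u, r) \<notin> A"
    and no_in_out: "\<And>x v. x \<noteq> r \<Longrightarrow> v \<in> out_nbrs A r \<Longrightarrow> (x, v) \<notin> A"
    unfolding rooted_digraph_def by auto
  have "a \<noteq> r" using assms(2) noloop by (auto simp: out_nbrs_def)
  then show "y \<notin> out_nbrs A r" using no_in_out assms(3) by blast
  show "a \<in> V - {r}" "y \<in> V - {a, r}"
    using assms(3) \<open>a \<noteq> r\<close> AV noloop no_in_r by auto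
qed

definition cut_off :: "'a set \<Rightarrow> ('a \<times> 'a) set \<Rightarrow> 'a \<Rightarrow> 'a set \<Rightarrow> 'a set" where
  "cut_off V A r S = {z \<in> V. (r, z) \<notin> (induced_arcs A (V - S))\<^sup>*}"

lemma cut_off_psubset:
  assumes rd: "rooted_digraph V A r" and tc: "two_connected V A r"
    and a: "a \<in> V - {r}" and ay: "(a, y) \<in> A" and ay': "(a, y') \<in> A" and "y' \<noteq> y"
    and y'_cut: "y' \<in> cut_off V A r {a, y}"
  shows "cut_off V A r {a, y'} \<subset> cut_off V A r {a, y}"
proof -
  from rd have AV: "A \<subseteq> V \<times> V" and "\<And>x. (x, x) \<notin> A" and "\<And>u. (u, r) \<notin> A"
    unfolding rooted_digraph_def by auto
  then have y: "y \<in> V - {a, r}" and y': "y' \<in> V - {a, y, r}"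
    using ay ay' \<open>y' \<noteq> y\<close> by auto
  have r: "r \<in> V - {a, y}" using rd a y unfolding rooted_digraph_def by auto
  have r_y': "(r, y') \<notin> (induced_arcs A (V - {a, y}))\<^sup>*"
    using y'_cut by (simp add: cut_off_def)
  have "cut_off V A r {a, y'} \<subseteq> cut_off V A r {a, y}"
  proof
    fix w assume w: "w \<in> cut_off V A r {a, y'}"
    show "w \<in> cut_off V A r {a, y}"
    proof (rule ccontr)
      assume "w \<notin> cut_off V A r {a, y}"
      then have "(r, w) \<in> (induced_arcs A (V - {a, y}))\<^sup>*" using w by (simp add: cut_off_def)
      from rtrancl_induced_arcs_avoid_or_hit[OF this, of y'] show False
      proof
        assume "(r, w) \<in> (induced_arcs A (V - {a, y} - {y'}))\<^sup>*"
        then have "(r, w) \<in> (induced_arcs A (V - {a, y'}))\<^sup>*"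
          by (rule rtrancl_induced_arcs_mono[rotated]) auto
        then show False using w by (simp add: cut_off_def)
      qed (use r_y' in simp)
    qed
  qed
  moreover have "y \<in> cut_off V A r {a, y}"
    using rtrancl_induced_arcsD[of r y A "V - {a, y}"] y by (auto simp: cut_off_def)
  moreover have "(r, y) \<in> (induced_arcs A (V - {a, y'}))\<^sup>*"
  proof -
    have "(r, y) \<in> (induced_arcs A (V - {a}))\<^sup>*"
      using two_connected_reachable_avoiding[OF tc a] y by auto
    then have "(r, y) \<in> (induced_arcs A (V - {a} - {y'}))\<^sup>* \<or>
        (\<exists>p. (r, p) \<in> (induced_arcs A (V - {a} - {y'}))\<^sup>* \<and> (p, y') \<in> A)"
      using rtrancl_induced_arcs_avoid_or_enter[of r y A "V - {a}" y'] y' by auto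
    moreover have "(r, y) \<in> (induced_arcs A (V - {a} - {y'}))\<^sup>*"
      if rp: "(r, p) \<in> (induced_arcs A (V - {a} - {y'}))\<^sup>*" and py': "(p, y') \<in> A" for p
      \<comment> \<open>a path to y' avoiding a must pass through y, as y' is cut off by {a, y}\<close>
    proof (rule ccontr)
      assume "(r, y) \<notin> (induced_arcs A (V - {a} - {y'}))\<^sup>*"
      with rtrancl_induced_arcs_avoid_or_hit[OF rp, of y]
      have rp': "(r, p) \<in> (induced_arcs A (V - {a} - {y'} - {y}))\<^sup>*" by blast
      have "p \<in> V - {a, y}" using rtrancl_induced_arcsD[OF rp'] r by auto
      with py' y' have "(p, y') \<in> induced_arcs A (V - {a, y})" by auto
      moreover from rp' have "(r, p) \<in> (induced_arcs A (V - {a, y}))\<^sup>*"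
        by (rule rtrancl_induced_arcs_mono[rotated]) auto
      ultimately have "(r, y') \<in> (induced_arcs A (V - {a, y}))\<^sup>*"
        by (simp add: rtrancl.rtrancl_into_rtrancl)
      then show False using r_y' by simp
    qed
    ultimately have "(r, y) \<in> (induced_arcs A (V - {a} - {y'}))\<^sup>*" by blast
    moreover have "V - {a} - {y'} = V - {a, y'}" by auto
    ultimately show ?thesis by simp
  qed
  then have "y \<notin> cut_off V A r {a, y'}" by (simp add: cut_off_def)
  ultimately show ?thesis by blast
qed

lemma exists_contractible_arc:
  assumes rd: "rooted_digraph V A r" and tc: "two_connected V A r"
    and a: "a \<in> V - {r}" and "(a, y\<^sub>0) \<in> A"
  obtains y where "(a, y) \<in> A"
    and "\<And>z. z \<in> V - {a, y} \<Longrightarrow> (r, z) \<in> (induced_arcs A (V - {a, y}))\<^sup>*"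
proof -
  have finV: "finite V" and AV: "A \<subseteq> V \<times> V" and no_in_r: "\<And>u. (u, r) \<notin> A"
    using rd unfolding rooted_digraph_def by auto
  obtain y where ay: "(a, y) \<in> A"
    and y_min: "\<And>y'. (a, y') \<in> A \<Longrightarrow> card (cut_off V A r {a, y}) \<le> card (cut_off V A r {a, y'})"
    using ex_has_least_nat[of "\<lambda>y. (a, y) \<in> A" y\<^sub>0 "\<lambda>y. card (cut_off V A r {a, y})"]
      \<open>(a, y\<^sub>0) \<in> A\<close> by blast
  have "(r, z) \<in> (induced_arcs A (V - {a, y}))\<^sup>*" if z: "z \<in> V - {a, y}" for z
  proof (rule ccontr)
    assume r_z: "(r, z) \<notin> (induced_arcs A (V - {a, y}))\<^sup>*"
    have "(r, z) \<in> (induced_arcs A (V - {y}))\<^sup>*"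
      using two_connected_reachable_avoiding[OF tc] ay AV no_in_r z by blast
    moreover have "V - {y} - {a} = V - {a, y}" by auto
    ultimately have "(r, z) \<in> (induced_arcs A (V - {a, y}))\<^sup>* \<or> z = a \<or>
        (\<exists>y' \<in> V - {a, y}. (a, y') \<in> A \<and> (y', z) \<in> (induced_arcs A (V - {a, y}))\<^sup>*)"
      using rtrancl_induced_arcs_avoid_or_leave[of r z A "V - {y}" a] by simp
    then obtain y' where y': "y' \<in> V - {a, y}" "(a, y') \<in> A"
      and y'_z: "(y', z) \<in> (induced_arcs A (V - {a, y}))\<^sup>*"
      using r_z z by blast
    have "y' \<in> cut_off V A r {a, y}"
      using y' y'_z r_z by (auto simp: cut_off_def intro: rtrancl_trans)
    with cut_off_psubset[OF rd tc a ay \<open>(a, y') \<in> A\<close>] y'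
    have "cut_off V A r {a, y'} \<subset> cut_off V A r {a, y}" by auto
    moreover have "finite (cut_off V A r {a, y})" using finV by (simp add: cut_off_def)
    ultimately have "card (cut_off V A r {a, y'}) < card (cut_off V A r {a, y})"
      by (rule psubset_card_mono[rotated])
    with y_min[OF \<open>(a, y') \<in> A\<close>] show False by simp
  qed
  with ay show thesis by (rule that)
qed

lemma two_connected_second_in_nbr:
  assumes rd: "rooted_digraph V A r" and tc: "two_connected V A r"
    and "a \<in> V - {r}" "y \<in> V - {a, r}" "y \<notin> out_nbrs A r"
  obtains u where "(u, y) \<in> A" "u \<notin> {r, a, y}"
proof -
  have "(r, y) \<in> (induced_arcs A (V - {a}))\<^sup>*"
    using two_connected_reachable_avoiding[OF tc] assms(3,4) by auto
  then obtain p where "(p, y) \<in> induced_arcs A (V - {a})"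
    using assms(4) by (blast elim: rtranclE)
  moreover have "(y, y) \<notin> A" using rd unfolding rooted_digraph_def by auto
  ultimately show thesis using that \<open>y \<notin> out_nbrs A r\<close> by (auto simp: out_nbrs_def)
qed

lemma exists_out_nbr_with_out_arc:
  assumes "two_connected V A r" and "x \<in> V - {r}" "x \<notin> out_nbrs A r"
  obtains a y where "a \<in> out_nbrs A r" "(a, y) \<in> A"
proof -
  have "(r, x) \<in> (induced_arcs A V)\<^sup>*" using two_connected_reachable assms by auto
  then obtain a where ra: "(r, a) \<in> A" and ax: "(a, x) \<in> (induced_arcs A V)\<^sup>*"
    using assms(2) by (auto elim: converse_rtranclE)
  have "a \<noteq> x" using ra assms(3) by (auto simp: out_nbrs_def)
  then obtain y where "(a, y) \<in> A" using ax by (auto elim: converse_rtranclE)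
  with ra show thesis using that by (auto simp: out_nbrs_def)
qed

subsection \<open>Contracting an arc\<close>

definition contract :: "('a \<times> 'a) set \<Rightarrow> 'a \<Rightarrow> 'a \<Rightarrow> ('a \<times> 'a) set" where
  "contract A a y = {(u, v) \<in> A. u \<noteq> y \<and> v \<noteq> y} \<union> {(a, z) |z. (y, z) \<in> A}"

lemma rooted_digraph_contract:
  assumes rd: "rooted_digraph V A r" and a: "a \<in> out_nbrs A r" and ay: "(a, y) \<in> A"
  shows "rooted_digraph (V - {y}) (contract A a y) r"
    and "out_nbrs (contract A a y) r = out_nbrs A r"
proof -
  from rd have AV: "A \<subseteq> V \<times> V" and noloop: "\<And>x. (x, x) \<notin> A" and no_in_r: "\<And>u. (u, r) \<notin> A"
    and no_in_out: "\<And>x v. x \<noteq> r \<Longrightarrow> v \<in> out_nbrs A r \<Longrightarrow> (x, v) \<notin> A"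
    unfolding rooted_digraph_def by auto
  have ar: "a \<noteq> r" and yr: "y \<noteq> r" and ry: "y \<notin> out_nbrs A r"
    using rooted_digraph_arc_from_out_nbr[OF rd a ay] by auto
  show out: "out_nbrs (contract A a y) r = out_nbrs A r"
    using ar yr ry by (auto simp: out_nbrs_def contract_def)
  have "(y, a) \<notin> A" using no_in_out[OF yr a] .
  have "contract A a y \<subseteq> (V - {y}) \<times> (V - {y})"
    using AV ay noloop by (auto simp: contract_def)
  moreover have "\<And>x. (x, x) \<notin> contract A a y"
    using noloop \<open>(y, a) \<notin> A\<close> by (auto simp: contract_def)
  moreover have "\<And>u. (u, r) \<notin> contract A a y"
    using no_in_r by (auto simp: contract_def)
  moreover have "\<And>x v. x \<noteq> r \<Longrightarrow> v \<in> out_nbrs A r \<Longrightarrow> (x, v) \<notin> contract A a y"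
    using no_in_out yr by (auto simp: contract_def)
  ultimately show "rooted_digraph (V - {y}) (contract A a y) r"
    using rd yr unfolding rooted_digraph_def out by auto
qed

lemma rtrancl_contract:
  assumes "(x, z) \<in> (induced_arcs A W)\<^sup>*"
    and xa: "(x, a) \<in> A" "x \<in> W" "a \<in> W" "x \<noteq> y" "a \<noteq> y"
  shows "(x, if z = y then a else z) \<in> (induced_arcs (contract A a y) (W - {y}))\<^sup>*"
  using assms(1)
proof (induct rule: rtrancl_induct)
  case (step w z)
  show ?case
  proof (cases "z = y")
    case True
    have "(x, a) \<in> induced_arcs (contract A a y) (W - {y})"
      using xa by (auto simp: contract_def)
    then show ?thesis using True by auto
  next
    case False
    have "(if w = y then a else w, z) \<in> induced_arcs (contract A a y) (W - {y})"
      using step(2) False xa by (auto simp: contract_def)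
    then show ?thesis using step(3) False by (simp add: rtrancl.rtrancl_into_rtrancl)
  qed
qed (use xa in simp)

lemma two_connected_contract:
  assumes rd: "rooted_digraph V A r" and tc: "two_connected V A r"
    and a: "a \<in> out_nbrs A r" and ay: "(a, y) \<in> A"
    and contractible: "\<And>z. z \<in> V - {a, y} \<Longrightarrow> (r, z) \<in> (induced_arcs A (V - {a, y}))\<^sup>*"
  shows "two_connected (V - {y}) (contract A a y) r"
proof -
  have rV: "r \<in> V" using rd unfolding rooted_digraph_def by simp
  have ra: "(r, a) \<in> A" using a by (simp add: out_nbrs_def)
  have aV: "a \<in> V" and yr: "y \<noteq> r" and ay': "a \<noteq> y"
    using rooted_digraph_arc_from_out_nbr[OF rd a ay] by auto
  show ?thesis
    unfolding two_connected_iff_reachable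
  proof (intro conjI ballI)
    fix z assume z: "z \<in> V - {y}"
    have "(r, z) \<in> (induced_arcs A V)\<^sup>*" using two_connected_reachable[OF tc] z by simp
    from rtrancl_contract[OF this ra rV aV yr[symmetric] ay'] z
    show "(r, z) \<in> (induced_arcs (contract A a y) (V - {y}))\<^sup>*" by auto
  next
    fix s z assume s: "s \<in> V - {y} - {r}" and z: "z \<in> V - {y} - {s}"
    show "(r, z) \<in> (induced_arcs (contract A a y) (V - {y} - {s}))\<^sup>*"
    proof (cases "s = a")
      case True
      have "(r, z) \<in> (induced_arcs A (V - {a, y}))\<^sup>*" using contractible z True by auto
      then show ?thesis
        by (rule rtrancl_mono[THEN subsetD, rotated]) (auto simp: contract_def True)
    next
      case False
      have "(r, z) \<in> (induced_arcs A (V - {s}))\<^sup>*"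
        using two_connected_reachable_avoiding[OF tc] s z by auto
      moreover have "r \<in> V - {s}" "a \<in> V - {s}" using False rV aV s by auto
      ultimately have "(r, z) \<in> (induced_arcs (contract A a y) (V - {s} - {y}))\<^sup>*"
        using rtrancl_contract[of r z A "V - {s}" a y] ra yr ay' z by auto
      moreover have "V - {s} - {y} = V - {y} - {s}" by auto
      ultimately show ?thesis by simp
    qed
  qed
qed

subsection \<open>Extending a numbering of the contraction\<close>

text \<open>Doubling the old numbers leaves a free slot on each side of a; y takes the one facing u.\<close>

definition insert_next_to :: "('a \<Rightarrow> nat) \<Rightarrow> 'a \<Rightarrow> 'a \<Rightarrow> 'a \<Rightarrow> 'a \<Rightarrow> nat" where
  "insert_next_to \<sigma> a u y z =
     (if z = y then (if \<sigma> a < \<sigma> u then 2 * \<sigma> a + 2 else 2 * \<sigma> a) else 2 * \<sigma> z + 1)"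

lemma inj_on_insert_next_to:
  assumes "inj_on \<sigma> (W - {y})"
  shows "inj_on (insert_next_to \<sigma> a u y) W"
proof (rule inj_onI)
  fix p q assume pq: "p \<in> W" "q \<in> W" and eq: "insert_next_to \<sigma> a u y p = insert_next_to \<sigma> a u y q"
  show "p = q"
  proof (cases "p = y \<or> q = y")
    case True
    then show ?thesis using eq by (auto simp: insert_next_to_def split: if_splits; presburger)
  next
    case False
    then show ?thesis using eq pq inj_onD[OF assms] by (auto simp: insert_next_to_def)
  qed
qed

lemma insert_next_to_less_iff:
  "p \<noteq> y \<Longrightarrow> x \<noteq> y \<Longrightarrow>
    insert_next_to \<sigma> a u y p < insert_next_to \<sigma> a u y x \<longleftrightarrow> \<sigma> p < \<sigma> x"
  by (simp add: insert_next_to_def)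

lemma insert_next_to_less_after:
  "x \<noteq> y \<Longrightarrow> \<sigma> a < \<sigma> x \<Longrightarrow> insert_next_to \<sigma> a u y y < insert_next_to \<sigma> a u y x"
  by (simp add: insert_next_to_def)

lemma insert_next_to_greater_before:
  "x \<noteq> y \<Longrightarrow> \<sigma> x < \<sigma> a \<Longrightarrow> insert_next_to \<sigma> a u y x < insert_next_to \<sigma> a u y y"
  by (simp add: insert_next_to_def)

lemma insert_next_to_between:
  assumes "a \<noteq> y" "u \<noteq> y" "\<sigma> a \<noteq> \<sigma> u"
  shows "insert_next_to \<sigma> a u y a < insert_next_to \<sigma> a u y y \<and>
      insert_next_to \<sigma> a u y y < insert_next_to \<sigma> a u y u \<or>
    insert_next_to \<sigma> a u y u < insert_next_to \<sigma> a u y y \<and>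
      insert_next_to \<sigma> a u y y < insert_next_to \<sigma> a u y a"
  using assms by (auto simp: insert_next_to_def)

lemma insert_next_to_contract_arc:
  assumes "(p, x) \<in> contract A a y" "p \<noteq> y" "x \<noteq> y"
  shows "\<exists>q \<in> {p, y}. (q, x) \<in> A \<and>
    (\<sigma> p < \<sigma> x \<longrightarrow> insert_next_to \<sigma> a u y q < insert_next_to \<sigma> a u y x) \<and>
    (\<sigma> x < \<sigma> p \<longrightarrow> insert_next_to \<sigma> a u y x < insert_next_to \<sigma> a u y q)"
proof -
  from assms(1) consider "(p, x) \<in> A" | "p = a" "(y, x) \<in> A"
    by (auto simp: contract_def)
  then show ?thesis
  proof cases
    case 1
    then show ?thesis using assms(2,3) by (auto simp: insert_next_to_less_iff)
  next
    case 2
    then show ?thesis using assms(3)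
      by (auto intro!: bexI[of _ y] insert_next_to_less_after insert_next_to_greater_before)
  qed
qed

lemma rr_numbering_uncontract:
  assumes rd: "rooted_digraph V A r" and a: "a \<in> out_nbrs A r" and ay: "(a, y) \<in> A"
    and uy: "(u, y) \<in> A" "u \<notin> {r, a, y}"
    and \<sigma>: "rr_numbering (V - {y}) (contract A a y) r \<sigma>"
  shows "rr_numbering V A r (insert_next_to \<sigma> a u y)"
proof -
  let ?\<tau> = "insert_next_to \<sigma> a u y"
  have "u \<in> V" using rd uy(1) unfolding rooted_digraph_def by auto
  then have aV: "a \<in> V - {y} - {r}" and uV: "u \<in> V - {y} - {r}" and yV: "y \<in> V - {r}"
    using rooted_digraph_arc_from_out_nbr[OF rd a ay] uy(2) by auto
  from \<sigma> have inj: "inj_on \<sigma> (V - {y} - {r})"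
    and numbered: "\<And>x. x \<in> V - {y} - {r} \<Longrightarrow> x \<in> out_nbrs (contract A a y) r \<or>
      (\<exists>p \<in> V - {y} - {r}. \<exists>q \<in> V - {y} - {r}. p \<in> in_nbrs (contract A a y) x \<and>
         q \<in> in_nbrs (contract A a y) x \<and> \<sigma> p < \<sigma> x \<and> \<sigma> x < \<sigma> q)"
    unfolding rr_numbering_def by auto
  have lift: "\<exists>q \<in> V - {r}. (q, x) \<in> A \<and>
      (\<sigma> p < \<sigma> x \<longrightarrow> ?\<tau> q < ?\<tau> x) \<and> (\<sigma> x < \<sigma> p \<longrightarrow> ?\<tau> x < ?\<tau> q)"
    if "p \<in> V - {y} - {r}" "(p, x) \<in> contract A a y" "x \<noteq> y" for p x
    using insert_next_to_contract_arc[of p x A a y \<sigma> u] that yV by auto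
  show ?thesis
    unfolding rr_numbering_def
  proof (intro conjI ballI)
    have "V - {r} - {y} = V - {y} - {r}" by auto
    then show "inj_on ?\<tau> (V - {r})" using inj_on_insert_next_to inj by metis
  next
    fix x assume x: "x \<in> V - {r}"
    show "x \<in> out_nbrs A r \<or> (\<exists>p \<in> V - {r}. \<exists>q \<in> V - {r}.
      p \<in> in_nbrs A x \<and> q \<in> in_nbrs A x \<and> ?\<tau> p < ?\<tau> x \<and> ?\<tau> x < ?\<tau> q)"
    proof (cases "x = y")
      case True
      have "\<sigma> a \<noteq> \<sigma> u" using inj_onD[OF inj _ aV uV] uy(2) by auto
      with insert_next_to_between[of a y u \<sigma>] aV uV ay uy True show ?thesis
        by (auto simp: in_nbrs_def)
    next
      case False
      then have "x \<in> V - {y} - {r}" using x by auto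
      note numbered[OF this]
      moreover have "out_nbrs (contract A a y) r = out_nbrs A r"
        using rooted_digraph_contract(2)[OF rd a ay] .
      moreover have "\<exists>p \<in> V - {r}. \<exists>q \<in> V - {r}.
          p \<in> in_nbrs A x \<and> q \<in> in_nbrs A x \<and> ?\<tau> p < ?\<tau> x \<and> ?\<tau> x < ?\<tau> q"
        if "p \<in> V - {y} - {r}" "p \<in> in_nbrs (contract A a y) x" "\<sigma> p < \<sigma> x"
          "q \<in> V - {y} - {r}" "q \<in> in_nbrs (contract A a y) x" "\<sigma> x < \<sigma> q" for p q
        using lift[of p x] lift[of q x] that False by (fastforce simp: in_nbrs_def)
      ultimately show ?thesis by blast
    qed
  qed
qed

lemma rr_numbering_if_out_nbrs:
  assumes "finite V" "V - {r} \<subseteq> out_nbrs A r"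
  shows "\<exists>\<sigma>. rr_numbering V A r \<sigma>"
proof -
  obtain \<sigma> :: "_ \<Rightarrow> nat" where "inj_on \<sigma> V" using finite_imp_inj_to_nat_seg[OF assms(1)] by blast
  then have "rr_numbering V A r \<sigma>"
    using assms(2) unfolding rr_numbering_def by (auto intro: inj_on_subset)
  then show ?thesis by blast
qed

theorem lemma1:
  assumes "rooted_digraph V A r" and "two_connected V A r"
  shows "\<exists>\<sigma>. rr_numbering V A r \<sigma>"
  using assms
proof (induction "card V" arbitrary: V A rule: less_induct)
  case less
  note rd = less.prems(1) and tc = less.prems(2)
  have finV: "finite V" using rd unfolding rooted_digraph_def by auto
  show ?case
  proof (cases "V - {r} \<subseteq> out_nbrs A r")
    case True
    with finV show ?thesis by (rule rr_numbering_if_out_nbrs)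
  next
    case False
    then obtain x where "x \<in> V - {r}" "x \<notin> out_nbrs A r" by blast
    then obtain a y\<^sub>0 where a: "a \<in> out_nbrs A r" and "(a, y\<^sub>0) \<in> A"
      by (rule exists_out_nbr_with_out_arc[OF tc])
    then have aV: "a \<in> V - {r}" by (rule rooted_digraph_arc_from_out_nbr[OF rd])
    obtain y where ay: "(a, y) \<in> A"
      and contractible: "\<And>z. z \<in> V - {a, y} \<Longrightarrow> (r, z) \<in> (induced_arcs A (V - {a, y}))\<^sup>*"
      using exists_contractible_arc[OF rd tc aV \<open>(a, y\<^sub>0) \<in> A\<close>] by blast
    have yV: "y \<in> V - {a, r}" and "y \<notin> out_nbrs A r"
      using rooted_digraph_arc_from_out_nbr[OF rd a ay] by auto
    have "card (V - {y}) < card V" using card_Diff1_less[OF finV, of y] yV by simp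
    then obtain \<sigma> where "rr_numbering (V - {y}) (contract A a y) r \<sigma>"
      using less.hyps rooted_digraph_contract(1)[OF rd a ay]
        two_connected_contract[OF rd tc a ay contractible] by blast
    moreover obtain u where "(u, y) \<in> A" "u \<notin> {r, a, y}"
      using two_connected_second_in_nbr[OF rd tc aV yV \<open>y \<notin> out_nbrs A r\<close>] by blast
    ultimately show ?thesis using rr_numbering_uncontract[OF rd a ay] by blast
  qed
qed

end
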